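(* Let $K,G,m_0,A_g,B_g,\bar f_c,\bar f_t>0$, $m_g'(p)=A_g e^{\frac{p-\bar f_t/3}{B_g\bar f_c}}$, $e\in[0.5,1]$, and let $p^{tr}\in\mathbb R$, $\varrho^{tr}\ge0$, $r_e^{tr}\in\mathbb R$. For $\gamma\ge0$ let $\hat p_{tr}(\gamma)$ be the unique real $p_\gamma$ with $p_\gamma+\gamma Km_g'(p_\gamma)/\bar f_c=p^{tr}$, let $\hat\varrho_{tr}(\gamma)=\frac{1}{1+\gamma 6G/\bar f_c^2}\big(\varrho^{tr}-\gamma\frac{2Gm_0}{\sqrt6\bar f_c}\big)^+$, and $q_{tr}(\gamma)=\frac32\big(\frac{\hat\varrho_{tr}(\gamma)}{\bar f_c}\big)^2+m_0\big(\frac{\hat\varrho_{tr}(\gamma)r_e^{tr}}{\sqrt6\bar f_c}+\frac{\hat p_{tr}(\gamma)}{\bar f_c}\big)-1$. Then, with $p^a=\bar f_c/m_0$, $$q_{tr}\Big(\frac{\sqrt6\bar f_c\varrho^{tr}}{2Gm_0}\Big)\ge0\quad\text{if and only if}\quad p^{tr}-\frac{\sqrt6K}{2G}\frac{m_g'(p^a)}{m_0}\varrho^{tr}-p^a\ge0.$$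
   Context: $(x)^+=\max\{0,x\}$. In the paper, $p^{tr},\varrho^{tr},r_e^{tr}$ are the hydrostatic stress, deviatoric norm and Lode-angle function value of a trial stress, but the claim only uses them as the numbers specified. *)

theory Defs
  imports Complex_Main
begin

definition pos_part :: "real \<Rightarrow> real" where
  "pos_part x = max 0 x"

definition mg' :: "real \<Rightarrow> real \<Rightarrow> real \<Rightarrow> real \<Rightarrow> real \<Rightarrow> real" where
  "mg' Ag Bg fc ft p = Ag * exp ((p - ft / 3) / (Bg * fc))"

definition p_hat :: "real \<Rightarrow> real \<Rightarrow> real \<Rightarrow> real \<Rightarrow> real \<Rightarrow> real \<Rightarrow> real \<Rightarrow> real" where
  "p_hat K Ag Bg fc ft ptr \<gamma> =
     (THE p. p + \<gamma> * K * mg' Ag Bg fc ft p / fc = ptr)"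

definition rho_hat :: "real \<Rightarrow> real \<Rightarrow> real \<Rightarrow> real \<Rightarrow> real \<Rightarrow> real" where
  "rho_hat G m0 fc rtr \<gamma> =
     (1 / (1 + \<gamma> * 6 * G / fc^2)) * pos_part (rtr - \<gamma> * (2 * G * m0 / (sqrt 6 * fc)))"

definition q_tr :: "real \<Rightarrow> real \<Rightarrow> real \<Rightarrow> real \<Rightarrow> real \<Rightarrow> real \<Rightarrow> real \<Rightarrow> real \<Rightarrow> real \<Rightarrow> real \<Rightarrow> real \<Rightarrow> real" where
  "q_tr K G m0 Ag Bg fc ft ptr rtr retr \<gamma> =
     (let r = rho_hat G m0 fc rtr \<gamma>; p = p_hat K Ag Bg fc ft ptr \<gamma>
      in 3/2 * (r / fc)^2 + m0 * (r * retr / (sqrt 6 * fc) + p / fc) - 1)"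

end

theory Submission
  imports Defs
begin

text \<open>At \<open>\<gamma> = \<surd>6 fc \<rho>tr / (2 G m0)\<close> the return-mapped deviatoric norm \<open>\<rho>\<close> vanishes, so
  \<open>q_tr\<close> reduces to \<open>m0 p / fc - 1\<close> and its sign says \<open>p \<ge> pa = fc / m0\<close>. The return-mapped
  pressure \<open>p\<close> solves \<open>h p = ptr\<close> for the strictly increasing map \<open>h p = p + c m_g'(p)\<close>,
  hence \<open>p \<ge> pa\<close> iff \<open>ptr \<ge> h pa\<close>, which is the stated condition.\<close>

lemma strict_mono_add_scaled_mono:
  fixes f :: "real \<Rightarrow> real"
  assumes "mono f" "c \<ge> 0"
  shows "strict_mono (\<lambda>x. x + c * f x)"
proof (rule strict_monoI)
  fix x y :: real
  assume "x < y"
  moreover have "c * f x \<le> c * f y"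
    using \<open>x < y\<close> assms by (simp add: mono_def mult_left_mono)
  ultimately show "x + c * f x < y + c * f y" by linarith
qed

lemma exists_add_scaled_eq:
  fixes f :: "real \<Rightarrow> real"
  assumes "mono f" "continuous_on UNIV f" "\<And>x. f x \<ge> 0" "c \<ge> 0"
  shows "\<exists>x. x + c * f x = y"
proof -
  define h where "h = (\<lambda>x. x + c * f x)"
  define a where "a = y - c * f y"
  have "a \<le> y" using assms by (simp add: a_def)
  then have "c * f a \<le> c * f y"
    using assms by (simp add: mono_def mult_left_mono)
  then have "h a \<le> y" by (simp add: h_def a_def)
  moreover have "y \<le> h y" using assms by (simp add: h_def)
  moreover have "continuous_on {a..y} h"
    unfolding h_def by (intro continuous_intros continuous_on_subset[OF assms(2)]) auto
  ultimately obtain x where "h x = y" using IVT'[of h a y y] \<open>a \<le> y\<close> by blast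
  then show ?thesis by (auto simp: h_def)
qed

lemma mono_mg':
  assumes "Ag > 0" "Bg > 0" "fc > 0"
  shows "mono (mg' Ag Bg fc ft)"
  using assms by (intro monoI) (simp add: mg'_def divide_right_mono)

lemma continuous_on_mg':
  assumes "Bg > 0" "fc > 0"
  shows "continuous_on UNIV (mg' Ag Bg fc ft)"
  unfolding mg'_def using assms by (intro continuous_intros) auto

lemma p_hat_eq:
  assumes "Ag > 0" "Bg > 0" "fc > 0" "K > 0" "\<gamma> \<ge> 0"
  shows "p_hat K Ag Bg fc ft ptr \<gamma> + \<gamma> * K / fc * mg' Ag Bg fc ft (p_hat K Ag Bg fc ft ptr \<gamma>) = ptr"
proof -
  define h where "h = (\<lambda>p. p + \<gamma> * K / fc * mg' Ag Bg fc ft p)"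
  have c: "\<gamma> * K / fc \<ge> 0" using assms by simp
  have mono: "mono (mg' Ag Bg fc ft)" using assms(1-3) by (rule mono_mg')
  have "strict_mono h"
    unfolding h_def by (rule strict_mono_add_scaled_mono[OF mono c])
  moreover have "\<exists>p. h p = ptr"
    unfolding h_def using assms
    by (intro exists_add_scaled_eq[OF mono continuous_on_mg' _ c]) (simp_all add: mg'_def)
  ultimately have "\<exists>!p. h p = ptr" by (metis strict_mono_eq)
  moreover have "p_hat K Ag Bg fc ft ptr \<gamma> = (THE p. h p = ptr)"
    by (simp add: p_hat_def h_def)
  ultimately show ?thesis by (metis (mono_tags) h_def theI')
qed

lemma rho_hat_eq_0:
  assumes "G > 0" "m0 > 0" "fc > 0" "\<gamma> * (2 * G * m0 / (sqrt 6 * fc)) \<ge> rtr"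
  shows "rho_hat G m0 fc rtr \<gamma> = 0"
  using assms by (simp add: rho_hat_def pos_part_def)

theorem lemma2:
  fixes K G m0 Ag Bg fc ft e ptr rtr retr :: real
  assumes "K > 0" "G > 0" "m0 > 0" "Ag > 0" "Bg > 0" "fc > 0" "ft > 0"
    and "0.5 \<le> e" "e \<le> 1"
    and "rtr \<ge> 0"
  shows "q_tr K G m0 Ag Bg fc ft ptr rtr retr (sqrt 6 * fc * rtr / (2 * G * m0)) \<ge> 0
     \<longleftrightarrow> ptr - sqrt 6 * K / (2 * G) * (mg' Ag Bg fc ft (fc / m0) / m0) * rtr - fc / m0 \<ge> 0"
proof -
  define \<gamma> where "\<gamma> = sqrt 6 * fc * rtr / (2 * G * m0)"
  define p where "p = p_hat K Ag Bg fc ft ptr \<gamma>"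
  define h where "h = (\<lambda>x. x + \<gamma> * K / fc * mg' Ag Bg fc ft x)"
  have "\<gamma> \<ge> 0" using assms by (simp add: \<gamma>_def)
  have "rho_hat G m0 fc rtr \<gamma> = 0"
    using assms by (intro rho_hat_eq_0) (simp_all add: \<gamma>_def field_simps)
  then have "q_tr K G m0 Ag Bg fc ft ptr rtr retr \<gamma> = m0 * (p / fc) - 1"
    by (simp add: q_tr_def p_def Let_def)
  also have "\<dots> \<ge> 0 \<longleftrightarrow> fc / m0 \<le> p" using assms by (simp add: field_simps)
  also have "\<dots> \<longleftrightarrow> h (fc / m0) \<le> h p"
    using assms \<open>\<gamma> \<ge> 0\<close> unfolding h_def
    by (intro strict_mono_less_eq[symmetric] strict_mono_add_scaled_mono mono_mg') simp_all
  also have "h p = ptr"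
    using p_hat_eq[OF assms(4,5,6,1) \<open>\<gamma> \<ge> 0\<close>] by (simp add: h_def p_def)
  also have "h (fc / m0) = fc / m0 + sqrt 6 * K / (2 * G) * (mg' Ag Bg fc ft (fc / m0) / m0) * rtr"
    using assms by (simp add: h_def \<gamma>_def field_simps)
  finally show ?thesis by (simp add: \<gamma>_def) linarith
qed

end
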